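(* (a) If for some $i_0 \in \{1, \ldots, n\}$ one has $a_{i_0} \ge c_R$, then Herzog–Kunz generators $x_1, \ldots, x_n$ of $R$ can be chosen with $x_i = t^{a_i}$ for all $i \ge i_0$. (b) If moreover $k$ is algebraically closed of characteristic $0$, then the uniformizing parameter $t$ of $\overline R = k[[t]]$ can be chosen such that, in addition, $x_1 = t^{a_1}$ (and the valuation $v$, the integers $a_i$ and $c_R$ are unchanged by this choice).
   Context: Let $k$ be a field and let $(R,\mathfrak m)$ be a complete local noetherian domain of dimension $1$ containing $k$ with $R/\mathfrak m = k$, with normalization $\overline R$ having residue field $k$, so $\overline R = k[[t]]$ for a uniformizing parameter $t$ and $R \subseteq k[[t]]$ is finite birational with $Q(R) = k((t))$. Let $v$ be the $t$-adic valuation. For $A \subseteq k((t))$ let $v(A) = \{v(f): f\in A\setminus\{0\}\}$. The conductor is $\mathfrak C_R = \{x \in \overline R : x\overline R \subseteq R\}$; one has $\mathfrak C_R = t^{c_R}\overline R$, and $c_R$ is the conductor degree. The Herzog–Kunz sequence of $R$ is the set $v(\mathfrak m)\setminus v(\mathfrak m^2)$ listed increasingly as $a_1 < \cdots < a_n$ (then $n = \mathrm{edim}(R)$); Herzog–Kunz generators are elements $x_1,\ldots,x_n \in R$ with $v(x_i) = a_i$, and any such satisfy $R = k[[x_1,\ldots,x_n]]$ (the image of $k[[X_1,\dots,X_n]]\to k[[t]]$, $X_i\mapsto x_i$). *)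

theory Defs
  imports "HOL-Computational_Algebra.Formal_Power_Series" "HOL-Computational_Algebra.Polynomial"
begin

text \<open>The normalization \<open>k[[t]]\<close> is the type \<open>'a fps\<close>, \<open>t = fps_X\<close>,
  and the valuation \<open>v\<close> is \<open>subdegree\<close> (on nonzero series).\<close>

definition k_subalgebra :: "'a::field fps set \<Rightarrow> bool" where
  "k_subalgebra R \<longleftrightarrow> (\<forall>c. fps_const c \<in> R) \<and>
     (\<forall>f\<in>R. \<forall>g\<in>R. f + g \<in> R \<and> f * g \<in> R \<and> - f \<in> R)"

definition fps_finite_over :: "'a::field fps set \<Rightarrow> bool" where
  "fps_finite_over R \<longleftrightarrow> (\<exists>F. finite F \<and>
     (\<forall>f. \<exists>r. (\<forall>g\<in>F. r g \<in> R) \<and> f = (\<Sum>g\<in>F. r g * g)))"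

text \<open>R is birational to k[[t]]: the fraction field of R is Q(k[[t]]) = k((t)),
  i.e. every element of k[[t]] is a quotient of elements of R.\<close>
definition fps_birational :: "'a::field fps set \<Rightarrow> bool" where
  "fps_birational R \<longleftrightarrow> (\<forall>f. \<exists>a\<in>R. \<exists>b\<in>R. b \<noteq> 0 \<and> f * b = a)"

definition curve_ring :: "'a::field fps set \<Rightarrow> bool" where
  "curve_ring R \<longleftrightarrow> k_subalgebra R \<and> fps_finite_over R \<and> fps_birational R"

definition val_set :: "'a::field fps set \<Rightarrow> nat set" where
  "val_set A = subdegree ` (A - {0})"

definition max_ideal :: "'a::field fps set \<Rightarrow> 'a fps set" where
  "max_ideal R = {f \<in> R. fps_nth f 0 = 0}"

definition ideal_prod :: "'a::field fps set \<Rightarrow> 'a fps set \<Rightarrow> 'a fps set" where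
  "ideal_prod I J = {(\<Sum>i<N. a i * b i) | (N::nat) a b. (\<forall>i<N. a i \<in> I \<and> b i \<in> J)}"

definition conductor :: "'a::field fps set \<Rightarrow> 'a fps set" where
  "conductor R = {x. \<forall>y. x * y \<in> R}"

definition conductor_degree :: "'a::field fps set \<Rightarrow> nat" where
  "conductor_degree R = (THE c. conductor R = {fps_X ^ c * g | g. True})"

text \<open>Herzog-Kunz sequence, listed increasingly (index 0 = a_1).\<close>
definition HK_seq :: "'a::field fps set \<Rightarrow> nat list" where
  "HK_seq R = sorted_list_of_set (val_set (max_ideal R) - val_set (ideal_prod (max_ideal R) (max_ideal R)))"

definition alg_closed_type :: "'a::field itself \<Rightarrow> bool" where
  "alg_closed_type _ \<longleftrightarrow> (\<forall>p :: 'a poly. degree p > 0 \<longrightarrow> (\<exists>x. poly p x = 0))"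

end

theory Submission
  imports Defs "HOL-Analysis.Elementary_Metric_Spaces"
begin

text \<open>
  Since \<open>k[[t]]\<close> is finite and birational over \<open>R\<close>, a common denominator of finitely many
  module generators is a nonzero element of the conductor. The conductor is an ideal of
  \<open>k[[t]]\<close>, so it consists of all series of order at least \<open>c\<^sub>R\<close>; in particular every
  series of order \<open>a\<^sub>i \<ge> a\<^sub>i\<^sub>0 \<ge> c\<^sub>R\<close> lies in \<open>R\<close>, and for any new parameter \<open>s\<close> the
  powers \<open>s ^ a\<^sub>i\<close>, \<open>i \<ge> i\<^sub>0\<close>, can serve as Herzog-Kunz generators.
  For (b) write an element \<open>x\<^sub>1 \<in> R\<close> of order \<open>a\<^sub>1\<close> as \<open>t ^ a\<^sub>1 * u\<close> with \<open>u\<close> a unit. An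
  \<open>a\<^sub>1\<close>-th root of \<open>u(0)\<close> exists in the algebraically closed field \<open>k\<close>, and it lifts to an
  \<open>a\<^sub>1\<close>-th root \<open>w\<close> of \<open>u\<close> by Newton iteration, which converges \<open>t\<close>-adically because
  \<open>a\<^sub>1\<close> is invertible in characteristic 0. Then \<open>s = t * w\<close> is a parameter with
  \<open>s ^ a\<^sub>1 = x\<^sub>1\<close>.
\<close>

unbundle fps_syntax

lemma k_subalgebra_const: "k_subalgebra R \<Longrightarrow> fps_const c \<in> R"
  by (simp add: k_subalgebra_def)

lemma k_subalgebra_add: "k_subalgebra R \<Longrightarrow> f \<in> R \<Longrightarrow> g \<in> R \<Longrightarrow> f + g \<in> R"
  by (simp add: k_subalgebra_def)

lemma k_subalgebra_mult: "k_subalgebra R \<Longrightarrow> f \<in> R \<Longrightarrow> g \<in> R \<Longrightarrow> f * g \<in> R"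
  by (simp add: k_subalgebra_def)

lemma k_subalgebra_sum_mem:
  assumes "k_subalgebra R" "\<And>g. g \<in> S \<Longrightarrow> h g \<in> R"
  shows "sum h S \<in> R"
  using assms(2) k_subalgebra_const[OF assms(1), of 0]
  by (induction S rule: infinite_finite_induct) (simp_all add: k_subalgebra_add[OF assms(1)])

lemma k_subalgebra_prod_mem:
  assumes "k_subalgebra R" "\<And>g. g \<in> S \<Longrightarrow> h g \<in> R"
  shows "prod h S \<in> R"
  using assms(2) k_subalgebra_const[OF assms(1), of 1]
  by (induction S rule: infinite_finite_induct) (simp_all add: k_subalgebra_mult[OF assms(1)])

lemma conductor_mult_mem: "x \<in> conductor R \<Longrightarrow> x * g \<in> conductor R"
  by (simp add: conductor_def mult.assoc)

lemma conductor_ne_zero: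
  fixes R :: "'a::field fps set"
  assumes R: "curve_ring R"
  shows "\<exists>b\<in>conductor R. b \<noteq> 0"
proof -
  have ks: "k_subalgebra R" using R by (simp add: curve_ring_def)
  obtain F where F: "finite F" "\<And>f. \<exists>r. (\<forall>g\<in>F. r g \<in> R) \<and> f = (\<Sum>g\<in>F. r g * g)"
    using R unfolding curve_ring_def fps_finite_over_def by blast
  obtain A B where A: "\<And>f. A f \<in> R" and B: "\<And>f. B f \<in> R" "\<And>f. B f \<noteq> 0"
    and AB: "\<And>f. f * B f = A f"
    using R unfolding curve_ring_def fps_birational_def by metis
  define b where "b = prod B F"
  have "b * y \<in> R" for y
  proof -
    obtain r where r: "\<And>g. g \<in> F \<Longrightarrow> r g \<in> R" and y: "y = (\<Sum>g\<in>F. r g * g)"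
      using F(2) by blast
    have summand: "b * (r g * g) = r g * (A g * prod B (F - {g}))" if "g \<in> F" for g
      using that F(1) AB[of g] by (simp add: b_def prod.remove algebra_simps)
    have "b * y = (\<Sum>g\<in>F. b * (r g * g))" by (simp add: y sum_distrib_left)
    also have "\<dots> = (\<Sum>g\<in>F. r g * (A g * prod B (F - {g})))"
      by (rule sum.cong[OF refl summand])
    also have "\<dots> \<in> R"
      by (intro k_subalgebra_sum_mem k_subalgebra_mult k_subalgebra_prod_mem ks r A B)
    finally show ?thesis .
  qed
  moreover have "b \<noteq> 0" using B(2) F(1) by (simp add: b_def)
  ultimately show ?thesis by (auto simp: conductor_def)
qed

text \<open>No additive closure is needed: a series of order \<open>\<ge> c\<close> is a multiple of one of order \<open>c\<close>.\<close>

lemma fps_mult_closed_eq_order_ge: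
  fixes I :: "'a::field fps set"
  assumes mult: "\<And>x g. x \<in> I \<Longrightarrow> x * g \<in> I" and b: "b \<in> I" "b \<noteq> 0"
  shows "\<exists>c. I = {f. f = 0 \<or> c \<le> subdegree f}"
proof -
  define c where "c = (LEAST m. \<exists>h\<in>I. h \<noteq> 0 \<and> subdegree h = m)"
  obtain h where h: "h \<in> I" "h \<noteq> 0" "subdegree h = c"
    using LeastI[of "\<lambda>m. \<exists>h\<in>I. h \<noteq> 0 \<and> subdegree h = m" "subdegree b"] b
    unfolding c_def by blast
  have "f \<in> I" if "c \<le> subdegree f" for f
  proof -
    define u where "u = fps_shift c h"
    have u0: "u $ 0 \<noteq> 0" using h nth_subdegree_nonzero[of h] by (simp add: u_def)
    have "h = u * fps_X ^ c" using subdegree_decompose'[of c h] h(3) by (simp add: u_def)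
    then have "h * (inverse u * fps_shift c f) = (inverse u * u) * (fps_shift c f * fps_X ^ c)"
      by (simp add: algebra_simps)
    also have "\<dots> = fps_shift c f * fps_X ^ c" using u0 by (simp add: inverse_mult_eq_1)
    also have "\<dots> = f" using that by (rule subdegree_decompose'[symmetric])
    finally show ?thesis using mult[OF h(1)] by metis
  qed
  moreover have "c \<le> subdegree f" if "f \<in> I" "f \<noteq> 0" for f
    unfolding c_def by (rule Least_le) (use that in blast)
  ultimately have "I = {f. f = 0 \<or> c \<le> subdegree f}"
    using mult[OF b(1), of 0] by auto
  then show ?thesis ..
qed

lemma fps_X_power_multiples_eq:
  "{fps_X ^ c * g | g :: 'a::field fps. True} = {f. f = 0 \<or> c \<le> subdegree f}"
proof (intro set_eqI iffI)
  fix f :: "'a fps"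
  assume "f \<in> {fps_X ^ c * g | g. True}"
  then obtain g where "f = fps_X ^ c * g" by blast
  then show "f \<in> {f. f = 0 \<or> c \<le> subdegree f}"
    by (cases "g = 0") (simp_all add: fps_X_power_subdegree)
next
  fix f :: "'a fps"
  assume "f \<in> {f. f = 0 \<or> c \<le> subdegree f}"
  then have "f = fps_X ^ c * fps_shift c f"
    using subdegree_decompose'[of c f] by (auto simp: mult.commute)
  then show "f \<in> {fps_X ^ c * g | g. True}" by blast
qed

lemma conductor_eq_order_ge:
  fixes R :: "'a::field fps set"
  assumes R: "curve_ring R"
  shows "conductor R = {f. f = 0 \<or> conductor_degree R \<le> subdegree f}"
proof -
  obtain c where c: "conductor R = {f. f = 0 \<or> c \<le> subdegree f}"
    using conductor_ne_zero[OF R] fps_mult_closed_eq_order_ge[OF conductor_mult_mem] by metis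
  have order_ge_inj: "d = c"
    if "{f :: 'a fps. f = 0 \<or> d \<le> subdegree f} = {f. f = 0 \<or> c \<le> subdegree f}" for d
    using that[THEN eqset_imp_iff, of "fps_X ^ c"] that[THEN eqset_imp_iff, of "fps_X ^ d"]
    by (simp add: fps_X_power_subdegree)
  have "conductor_degree R = c"
    unfolding conductor_degree_def fps_X_power_multiples_eq c
    by (rule the_equality) (auto intro: order_ge_inj[OF sym])
  then show ?thesis using c by simp
qed

lemma mem_if_conductor_degree_le_subdegree:
  fixes R :: "'a::field fps set"
  assumes "curve_ring R" "conductor_degree R \<le> subdegree f"
  shows "f \<in> R"
proof -
  have "f \<in> conductor R" using assms by (simp add: conductor_eq_order_ge)
  then have "f * 1 \<in> R" unfolding conductor_def by blast
  then show ?thesis by simp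
qed

lemma HK_seq_nth_realized:
  assumes "i < length (HK_seq R)"
  shows "\<exists>f\<in>R. f \<noteq> 0 \<and> f $ 0 = 0 \<and> subdegree f = HK_seq R ! i"
proof -
  have "set (HK_seq R) \<subseteq> val_set (max_ideal R)"
    unfolding HK_seq_def by (cases "finite (val_set (max_ideal R)
      - val_set (ideal_prod (max_ideal R) (max_ideal R)))") auto
  then have "HK_seq R ! i \<in> val_set (max_ideal R)" using assms nth_mem by blast
  then show ?thesis unfolding val_set_def max_ideal_def by force
qed

lemma alg_closed_type_nth_root:
  assumes "alg_closed_type TYPE('a::field)" "0 < m"
  shows "\<exists>r::'a. r ^ m = c"
proof -
  define p where "p = monom (1::'a) m + [:-c:]"
  have "degree p = m" using assms(2) unfolding p_def
    by (subst degree_add_eq_left) (auto simp: degree_monom_eq)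
  then obtain r where "poly p r = 0" using assms unfolding alg_closed_type_def by auto
  then show ?thesis by (auto simp: p_def poly_monom)
qed

lemma dist_fps_le_half:
  fixes a b x y q :: "'a::idom fps"
  assumes diff: "a - b = (x - y) * q" and q0: "q $ 0 = 0"
  shows "dist a b \<le> dist x y / 2"
proof (cases "a = b")
  case False
  then have "(x - y) * q \<noteq> 0" by (simp flip: diff)
  then have "x \<noteq> y" "q \<noteq> 0" by auto
  moreover have "subdegree q \<noteq> 0" using q0 \<open>q \<noteq> 0\<close> by (simp add: subdegree_eq_0_iff)
  ultimately have "subdegree (x - y) + 1 \<le> subdegree (a - b)" by (simp add: diff)
  then have "inverse (2 ^ subdegree (a - b)) \<le> (inverse (2 ^ (subdegree (x - y) + 1)) :: real)"
    by (intro le_imp_inverse_le power_increasing) auto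
  then show ?thesis using False \<open>x \<noteq> y\<close> by (simp add: dist_fps_def)
qed (simp add: dist_fps_def)

lemma closed_fps_nth_eq: "closed {f :: 'a::group_add fps. f $ n = c}"
  unfolding closed_def open_fps_iff
proof
  fix F assume "F \<in> - {f. f $ n = c}"
  then have "{G. fps_cutoff (Suc n) G = fps_cutoff (Suc n) F} \<subseteq> - {f. f $ n = c}"
    by (auto dest: arg_cong[where f = "\<lambda>f. f $ n"])
  then show "\<exists>k. {G. fps_cutoff k G = fps_cutoff k F} \<subseteq> - {f. f $ n = c}" ..
qed

lemma fps_nth_root_exists:
  fixes u :: "'a::field fps"
  assumes char: "CHAR('a) = 0" and "0 < m" and r: "r ^ m = u $ 0" and u0: "u $ 0 \<noteq> 0"
  shows "\<exists>w. w ^ m = u"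
proof -
  \<comment> \<open>Newton's map for \<open>w ^ m = u\<close> with the derivative frozen at the constant term \<open>r\<close>;
      on series with constant term \<open>r\<close> it is a \<open>t\<close>-adic contraction with factor \<open>1/2\<close>.\<close>
  define d where "d = inverse (of_nat m * r ^ (m - 1))"
  define T where "T w = w + fps_const d * (u - w ^ m)" for w
  define S where "S = {w :: 'a fps. w $ 0 = r}"
  have "r \<noteq> 0" using r u0 \<open>0 < m\<close> by (auto simp: zero_power)
  moreover have "of_nat m \<noteq> (0::'a)" using char \<open>0 < m\<close> by (simp add: of_nat_eq_0_iff_char_dvd)
  ultimately have dm: "d * (of_nat m * r ^ (m - 1)) = 1" by (simp add: d_def field_simps)
  have "T ` S \<subseteq> S" using r by (auto simp: S_def T_def fps_nth_power_0)
  moreover have "dist (T v) (T w) \<le> 1/2 * dist v w" if "v \<in> S" "w \<in> S" for v w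
  proof -
    define q where "q = 1 - fps_const d * (\<Sum>i<m. w ^ (m - Suc i) * v ^ i)"
    have "T v - T w = (v - w) - fps_const d * (v ^ m - w ^ m)"
      by (simp add: T_def algebra_simps)
    also have "\<dots> = (v - w) * q"
      by (simp add: q_def power_diff_sumr2 algebra_simps)
    finally have "T v - T w = (v - w) * q" .
    moreover have "q $ 0 = 0"
      using that dm by (simp add: q_def S_def fps_sum_nth fps_nth_power_0 flip: power_add)
    ultimately show ?thesis using dist_fps_le_half[of "T v" "T w" v w q] by simp
  qed
  moreover have "complete S" "S \<noteq> {}"
    using closed_fps_nth_eq by (auto simp: S_def complete_eq_closed intro: exI[of _ "fps_const r"])
  ultimately obtain w where "T w = w" using Banach_fix[of S "1/2" T] by auto
  then have "w ^ m = u" using dm by (auto simp: T_def)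
  then show ?thesis ..
qed

lemma fps_eq_power_of_parameter:
  fixes y :: "'a::field fps"
  assumes alg: "alg_closed_type TYPE('a)" and char: "CHAR('a) = 0"
    and y: "y \<noteq> 0" "subdegree y = m" and "0 < m"
  shows "\<exists>s. subdegree s = 1 \<and> s ^ m = y"
proof -
  define u where "u = fps_shift m y"
  have u0: "u $ 0 \<noteq> 0" using y nth_subdegree_nonzero[of y] by (simp add: u_def)
  obtain r where "r ^ m = u $ 0" using alg_closed_type_nth_root[OF alg \<open>0 < m\<close>] by blast
  then obtain w where w: "w ^ m = u" using fps_nth_root_exists[OF char \<open>0 < m\<close> _ u0] by blast
  then have "w $ 0 \<noteq> 0" using u0 \<open>0 < m\<close> by (auto simp: fps_nth_power_0 zero_power)
  then have "subdegree (fps_X * w) = 1" by (subst subdegree_mult) auto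
  moreover have "(fps_X * w) ^ m = y"
    using subdegree_decompose'[of m y] y by (simp add: power_mult_distrib w u_def mult.commute)
  ultimately show ?thesis by blast
qed

lemma HK_generators_with_power_tail:
  fixes R :: "'a::field fps set" and s :: "'a fps"
  defines "n \<equiv> length (HK_seq R)" and "a \<equiv> \<lambda>i. HK_seq R ! (i - 1)"
  assumes R: "curve_ring R" and s: "subdegree s = 1"
    and i0: "i0 \<in> {1..n}" "conductor_degree R \<le> a i0"
    and J: "\<And>i. i \<in> J \<Longrightarrow> s ^ a i \<in> R"
  shows "\<exists>x. (\<forall>i\<in>{1..n}. x i \<in> R \<and> x i \<noteq> 0 \<and> subdegree (x i) = a i) \<and>
             (\<forall>i\<in>{i0..n} \<union> J. x i = s ^ a i)"
proof -
  have "\<exists>f. f \<in> R \<and> f \<noteq> 0 \<and> subdegree f = a i" if "i \<in> {1..n}" for i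
  proof -
    have "i - 1 < length (HK_seq R)" using that by (auto simp: n_def)
    then show ?thesis using HK_seq_nth_realized[of "i - 1" R] by (auto simp: a_def)
  qed
  then obtain F where F: "\<And>i. i \<in> {1..n} \<Longrightarrow> F i \<in> R \<and> F i \<noteq> 0 \<and> subdegree (F i) = a i"
    by metis
  have "s \<noteq> 0" using s by auto
  then have s_power: "s ^ k \<noteq> 0" "subdegree (s ^ k) = k" for k
    using s by simp_all
  have "s ^ a i \<in> R" if "i \<in> {i0..n}" for i
  proof (rule mem_if_conductor_degree_le_subdegree[OF R])
    have "a i0 \<le> a i" using that i0(1) unfolding a_def n_def
      by (intro sorted_nth_mono) (auto simp: HK_seq_def)
    then show "conductor_degree R \<le> subdegree (s ^ a i)" using i0(2) s by simp
  qed
  then have "\<forall>i\<in>{1..n}. (if i \<in> {i0..n} \<union> J then s ^ a i else F i) \<in> R \<and>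
      (if i \<in> {i0..n} \<union> J then s ^ a i else F i) \<noteq> 0 \<and>
      subdegree (if i \<in> {i0..n} \<union> J then s ^ a i else F i) = a i"
    using F J s_power by auto
  then show ?thesis by (intro exI[of _ "\<lambda>i. if i \<in> {i0..n} \<union> J then s ^ a i else F i"]) auto
qed

theorem mainTheorem3:
  fixes R :: "'a::field fps set"
  assumes R: "curve_ring R"
  defines "n \<equiv> length (HK_seq R)"
      and "a \<equiv> (\<lambda>i. HK_seq R ! (i - 1))"
      and "c \<equiv> conductor_degree R"
  assumes i0: "i0 \<in> {1..n}" and ai0: "a i0 \<ge> c"
  shows "(\<exists>x :: nat \<Rightarrow> 'a fps.
            (\<forall>i\<in>{1..n}. x i \<in> R \<and> x i \<noteq> 0 \<and> subdegree (x i) = a i) \<and>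
            (\<forall>i\<in>{i0..n}. x i = fps_X ^ a i))
       \<and> ((alg_closed_type TYPE('a) \<and> CHAR('a) = 0) \<longrightarrow>
          (\<exists>s :: 'a fps. subdegree s = 1 \<and>
             (\<exists>x :: nat \<Rightarrow> 'a fps.
               (\<forall>i\<in>{1..n}. x i \<in> R \<and> x i \<noteq> 0 \<and> subdegree (x i) = a i) \<and>
               (\<forall>i\<in>{i0..n}. x i = s ^ a i) \<and>
               x 1 = s ^ a 1)))"
proof -
  have "i0 \<in> {1..length (HK_seq R)}" "conductor_degree R \<le> HK_seq R ! (i0 - 1)"
    using i0 ai0 by (simp_all add: n_def a_def c_def)
  note generators = HK_generators_with_power_tail[OF R _ this, folded n_def]
  show ?thesis
  proof (intro conjI impI)
    show "\<exists>x. (\<forall>i\<in>{1..n}. x i \<in> R \<and> x i \<noteq> 0 \<and> subdegree (x i) = a i) \<and>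
              (\<forall>i\<in>{i0..n}. x i = fps_X ^ a i)"
      using generators[of fps_X "{}"] unfolding a_def by simp
  next
    assume "alg_closed_type TYPE('a) \<and> CHAR('a) = 0"
    then have alg: "alg_closed_type TYPE('a)" and char: "CHAR('a) = 0" by auto
    have "0 < length (HK_seq R)" using i0 by (auto simp: n_def)
    then obtain y where y: "y \<in> R" "y \<noteq> 0" "y $ 0 = 0" "subdegree y = a 1"
      using HK_seq_nth_realized[of 0 R] unfolding a_def by auto
    then have "0 < a 1" by (metis gr0I subdegree_eq_0_iff)
    then obtain s where s: "subdegree s = 1" "s ^ a 1 = y"
      using fps_eq_power_of_parameter[OF alg char y(2,4)] by blast
    then obtain x where "\<forall>i\<in>{1..n}. x i \<in> R \<and> x i \<noteq> 0 \<and> subdegree (x i) = a i"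
      and "\<forall>i\<in>{i0..n} \<union> {1}. x i = s ^ a i"
      using generators[of s "{1}"] y(1) unfolding a_def by auto
    then show "\<exists>s. subdegree s = 1 \<and>
        (\<exists>x. (\<forall>i\<in>{1..n}. x i \<in> R \<and> x i \<noteq> 0 \<and> subdegree (x i) = a i) \<and>
             (\<forall>i\<in>{i0..n}. x i = s ^ a i) \<and> x 1 = s ^ a 1)"
      using s(1) by blast
  qed
qed

end
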